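(* Let $K$ be a field of characteristic zero and $W_n$ the Witt Lie algebra. The set of locally finite elements of $W_n$ that are homogeneous with respect to the $\mathbb{Z}^n$-grading $W_n=\bigoplus_{\alpha\in\mathbb{Z}^n}x^\alpha\mathcal{H}_n$ equals $\mathcal{H}_n$.
   Context: $W_n=\mathrm{Der}_K(K[x_1^{\pm1},\ldots,x_n^{\pm1}])$, $x^\alpha=x_1^{\alpha_1}\cdots x_n^{\alpha_n}$, $\mathcal{H}_n=\bigoplus_{i=1}^nKH_i$ with $H_i=x_i\partial_i$; homogeneous elements are those lying in some $x^\alpha\mathcal{H}_n$. An element $a$ is locally finite if $\dim_K\sum_{i\ge0}K\,\mathrm{ad}(a)^i(b)<\infty$ for all $b\in W_n$. *)

theory Defs
  imports Complex_Main "HOL-Library.Function_Algebras"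
begin

text \<open>Coordinate model of the Witt algebra W_n = Der(K[x_1^{+-1},...,x_n^{+-1}]):
  W_n has K-basis x^alpha H_i (alpha in Z^n, 1 <= i <= n, H_i = x_i d_i), so an element
  is a finitely supported coefficient function w alpha i (coefficient of x^alpha H_i).
  Exponent vectors alpha in Z^n are functions nat => int vanishing from index n on;
  the index i ranges over {0..<n}.\<close>

definition exps :: "nat \<Rightarrow> (nat \<Rightarrow> int) set" where
  "exps n = {\<alpha>. \<forall>i\<ge>n. \<alpha> i = 0}"

definition Witt :: "nat \<Rightarrow> ((nat \<Rightarrow> int) \<Rightarrow> nat \<Rightarrow> 'k::field) set" where
  "Witt n = {w. finite {(\<alpha>, i). w \<alpha> i \<noteq> 0} \<and>
                (\<forall>\<alpha> i. w \<alpha> i \<noteq> 0 \<longrightarrow> \<alpha> \<in> exps n \<and> i < n)}"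

text \<open>Lie bracket, determined by
  [x^alpha H_i, x^beta H_j] = beta_i x^(alpha+beta) H_j - alpha_j x^(alpha+beta) H_i.\<close>

definition witt_bracket :: "nat \<Rightarrow> ((nat \<Rightarrow> int) \<Rightarrow> nat \<Rightarrow> 'k::field)
    \<Rightarrow> ((nat \<Rightarrow> int) \<Rightarrow> nat \<Rightarrow> 'k) \<Rightarrow> ((nat \<Rightarrow> int) \<Rightarrow> nat \<Rightarrow> 'k)" where
  "witt_bracket n a b = (\<lambda>\<gamma> k.
     \<Sum>\<alpha>\<in>{\<alpha>. \<exists>i. a \<alpha> i \<noteq> 0}.
        \<Sum>i<n. a \<alpha> i * b (\<gamma> - \<alpha>) k * of_int ((\<gamma> - \<alpha>) i)
              - a \<alpha> k * b (\<gamma> - \<alpha>) i * of_int (\<alpha> i))"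

definition wscale :: "'k::field \<Rightarrow> ((nat \<Rightarrow> int) \<Rightarrow> nat \<Rightarrow> 'k) \<Rightarrow> ((nat \<Rightarrow> int) \<Rightarrow> nat \<Rightarrow> 'k)" where
  "wscale c w = (\<lambda>\<alpha> i. c * w \<alpha> i)"

definition locally_finite :: "nat \<Rightarrow> ((nat \<Rightarrow> int) \<Rightarrow> nat \<Rightarrow> 'k::field) \<Rightarrow> bool" where
  "locally_finite n a \<longleftrightarrow> (\<forall>b\<in>Witt n. \<exists>F. finite F \<and>
      {((witt_bracket n a) ^^ i) b | i. True} \<subseteq> module.span wscale F)"

definition homogeneous :: "((nat \<Rightarrow> int) \<Rightarrow> nat \<Rightarrow> 'k::field) \<Rightarrow> bool" where
  "homogeneous a \<longleftrightarrow> (\<exists>\<alpha>. \<forall>\<beta> i. a \<beta> i \<noteq> 0 \<longrightarrow> \<beta> = \<alpha>)"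

definition cartan :: "nat \<Rightarrow> ((nat \<Rightarrow> int) \<Rightarrow> nat \<Rightarrow> 'k::field) set" where
  "cartan n = {a \<in> Witt n. \<forall>\<beta> i. a \<beta> i \<noteq> 0 \<longrightarrow> \<beta> = 0}"

end

theory Submission
  imports Defs
begin

text \<open>An element \<open>H = \<Sum> c\<^sub>i H\<^sub>i\<close> of \<open>\<H>\<^sub>n\<close> acts diagonally on the coordinates \<open>x\<^sup>\<gamma> H\<^sub>i\<close>, multiplying them
  by \<open>H(\<gamma>) = \<Sum> c\<^sub>i \<gamma>\<^sub>i\<close>; so the orbit of \<open>b\<close> under \<open>ad H\<close> stays in the finite-dimensional space of
  coefficient functions supported on the support of \<open>b\<close>. Conversely, for \<open>a = x\<^sup>\<alpha> H\<close> with \<open>\<alpha> \<noteq> 0\<close>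
  and \<open>H \<noteq> 0\<close>, \<open>ad(a)\<^sup>m (x\<^sup>\<beta> H)\<close> is \<open>\<Prod>\<^sub>j\<^sub><\<^sub>m (H(\<beta> + j\<alpha>) - H(\<alpha>))\<close> times \<open>x\<^sup>\<beta>\<^sup>+\<^sup>m\<^sup>\<alpha> H\<close>, and in
  characteristic zero \<open>\<beta>\<close> can be chosen so that no factor vanishes. These iterates have pairwise
  distinct degrees, hence are linearly independent, and \<open>a\<close> is not locally finite.\<close>

lemma sum_fun_apply: "sum f A x = (\<Sum>a\<in>A. f a x)"
  by (induction A rule: infinite_finite_induct) auto

interpretation W: vector_space "wscale :: 'k::field \<Rightarrow> ((nat \<Rightarrow> int) \<Rightarrow> nat \<Rightarrow> 'k) \<Rightarrow> _"
  by unfold_locales (auto simp: wscale_def fun_eq_iff algebra_simps)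

definition hom_elem :: "(nat \<Rightarrow> int) \<Rightarrow> (nat \<Rightarrow> 'k::field) \<Rightarrow> (nat \<Rightarrow> int) \<Rightarrow> nat \<Rightarrow> 'k" where
  "hom_elem \<alpha> c = (\<lambda>\<gamma> k. if \<gamma> = \<alpha> then c k else 0)"

text \<open>\<open>x\<^sup>\<alpha> H\<close> with \<open>H = \<Sum> c\<^sub>i H\<^sub>i\<close> is \<open>hom_elem \<alpha> c\<close>, and \<open>pairing n c \<delta>\<close> is the eigenvalue \<open>H(\<delta>)\<close>
  of \<open>H\<close> on \<open>x\<^sup>\<delta>\<close>.\<close>

definition pairing :: "nat \<Rightarrow> (nat \<Rightarrow> 'k::field) \<Rightarrow> (nat \<Rightarrow> int) \<Rightarrow> 'k" where
  "pairing n c \<delta> = (\<Sum>i<n. c i * of_int (\<delta> i))"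

lemma pairing_add: "pairing n c (\<lambda>i. \<delta> i + \<epsilon> i) = pairing n c \<delta> + pairing n c \<epsilon>"
  by (simp add: pairing_def sum.distrib algebra_simps)

lemma pairing_scale_right: "pairing n c (\<lambda>i. m * \<delta> i) = of_int m * pairing n c \<delta>"
  by (simp add: pairing_def sum_distrib_left algebra_simps)

lemma pairing_scale_left: "pairing n (\<lambda>k. c k * t) \<delta> = pairing n c \<delta> * t"
  by (simp add: pairing_def sum_distrib_left algebra_simps)

lemma pairing_zero_left [simp]: "pairing n (\<lambda>k. 0) \<delta> = 0"
  and pairing_zero_right [simp]: "pairing n c 0 = 0"
  by (simp_all add: pairing_def)

lemma homogeneous_iff_hom_elem: "homogeneous a \<longleftrightarrow> (\<exists>\<alpha> c. a = hom_elem \<alpha> c)"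
proof
  assume "homogeneous a"
  then obtain \<alpha> where "\<forall>\<beta> i. a \<beta> i \<noteq> 0 \<longrightarrow> \<beta> = \<alpha>"
    unfolding homogeneous_def by blast
  then have "a = hom_elem \<alpha> (a \<alpha>)"
    by (intro ext) (auto simp: hom_elem_def)
  then show "\<exists>\<alpha> c. a = hom_elem \<alpha> c"
    by blast
qed (auto simp: homogeneous_def hom_elem_def)

lemma cartan_eq_hom_elem_zero: "a \<in> cartan n \<Longrightarrow> a = hom_elem 0 (a 0)"
  by (intro ext) (auto simp: cartan_def hom_elem_def)

lemma hom_elem_in_Witt:
  assumes "\<beta> \<in> exps n" and "\<And>k. c k \<noteq> 0 \<Longrightarrow> k < n"
  shows "hom_elem \<beta> c \<in> Witt n"
proof -
  have "{(\<gamma>, k). hom_elem \<beta> c \<gamma> k \<noteq> 0} \<subseteq> {\<beta>} \<times> {..<n}"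
    using assms(2) by (auto simp: hom_elem_def)
  then have "finite {(\<gamma>, k). hom_elem \<beta> c \<gamma> k \<noteq> 0}"
    by (rule finite_subset) auto
  then show ?thesis
    using assms by (auto simp: Witt_def hom_elem_def)
qed

lemma witt_bracket_hom_elem_left:
  "witt_bracket n (hom_elem \<alpha> c) w =
     (\<lambda>\<gamma> k. pairing n c (\<gamma> - \<alpha>) * w (\<gamma> - \<alpha>) k - pairing n (w (\<gamma> - \<alpha>)) \<alpha> * c k)"
proof (cases "\<exists>i. c i \<noteq> 0")
  case True
  then have "{\<gamma>. \<exists>i. hom_elem \<alpha> c \<gamma> i \<noteq> 0} = {\<alpha>}"
    by (auto simp: hom_elem_def)
  then show ?thesis
    by (simp add: witt_bracket_def hom_elem_def pairing_def sum_subtractf sum.distrib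
        sum_distrib_left sum_distrib_right algebra_simps)
next
  case False
  then have "{\<gamma>. \<exists>i. hom_elem \<alpha> c \<gamma> i \<noteq> 0} = {}"
    by (auto simp: hom_elem_def)
  with False show ?thesis
    by (simp add: witt_bracket_def pairing_def)
qed

lemma witt_bracket_cartan:
  "witt_bracket n (hom_elem 0 c) w = (\<lambda>\<gamma> k. pairing n c \<gamma> * w \<gamma> k)"
  by (simp add: witt_bracket_hom_elem_left)

lemma witt_bracket_hom_elem:
  "witt_bracket n (hom_elem \<alpha> c) (hom_elem \<delta> d) =
     hom_elem (\<lambda>i. \<alpha> i + \<delta> i) (\<lambda>k. pairing n c \<delta> * d k - pairing n d \<alpha> * c k)"
proof -
  have shift: "\<gamma> - \<alpha> = \<delta> \<longleftrightarrow> \<gamma> = (\<lambda>i. \<alpha> i + \<delta> i)" for \<gamma>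
    by (auto simp: diff_eq_eq plus_fun_def add.commute)
  then have cancel: "(\<lambda>i. \<alpha> i + \<delta> i) - \<alpha> = \<delta>"
    by simp
  show ?thesis
    unfolding witt_bracket_hom_elem_left by (intro ext) (simp add: hom_elem_def shift cancel)
qed

lemma witt_bracket_hom_elem_iterate:
  "(witt_bracket n (hom_elem \<alpha> c) ^^ m) (hom_elem \<beta> c) =
     hom_elem (\<lambda>i. \<beta> i + int m * \<alpha> i)
       (\<lambda>k. c k * (\<Prod>j<m. pairing n c (\<lambda>i. \<beta> i + int j * \<alpha> i) - pairing n c \<alpha>))"
proof (induction m)
  case 0
  then show ?case by simp
next
  case (Suc m)
  have degree: "(\<lambda>i. \<alpha> i + (\<beta> i + int m * \<alpha> i)) = (\<lambda>i. \<beta> i + int (Suc m) * \<alpha> i)"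
    by (simp add: algebra_simps)
  show ?case
    unfolding funpow.simps comp_def Suc.IH witt_bracket_hom_elem degree pairing_scale_left
    by (simp add: algebra_simps)
qed

text \<open>Characteristic zero enters here: for \<open>\<beta> = 2\<alpha>\<close> the factors are \<open>(j + 1) \<cdot> pairing n c \<alpha>\<close>.\<close>

lemma exists_degree_nonresonant:
  fixes c :: "nat \<Rightarrow> 'k::field_char_0"
  assumes "i0 < n" and "c i0 \<noteq> 0" and "\<alpha> \<in> exps n"
  obtains \<beta> where "\<beta> \<in> exps n" and "\<And>j::nat. pairing n c (\<lambda>i. \<beta> i + int j * \<alpha> i) \<noteq> pairing n c \<alpha>"
proof (cases "pairing n c \<alpha> = 0")
  case True
  define \<beta> :: "nat \<Rightarrow> int" where "\<beta> = (\<lambda>i. of_bool (i = i0))"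
  have "pairing n c \<beta> = c i0"
    using assms(1) by (simp add: pairing_def \<beta>_def of_bool_def if_distrib sum.delta cong: if_cong)
  with True assms have "pairing n c (\<lambda>i. \<beta> i + int j * \<alpha> i) \<noteq> pairing n c \<alpha>" for j
    by (simp add: pairing_add pairing_scale_right)
  moreover have "\<beta> \<in> exps n"
    using assms(1) by (simp add: exps_def \<beta>_def)
  ultimately show ?thesis
    by (blast intro: that)
next
  case False
  have "pairing n c (\<lambda>i. 2 * \<alpha> i + int j * \<alpha> i) - pairing n c \<alpha> = of_nat (Suc j) * pairing n c \<alpha>"
    for j
    unfolding pairing_add pairing_scale_right by (simp add: algebra_simps)
  with False have "pairing n c (\<lambda>i. 2 * \<alpha> i + int j * \<alpha> i) \<noteq> pairing n c \<alpha>" for j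
    by (metis mult_eq_0_iff of_nat_neq_0 right_minus_eq)
  moreover have "(\<lambda>i. 2 * \<alpha> i) \<in> exps n"
    using assms(3) by (simp add: exps_def)
  ultimately show ?thesis
    by (blast intro: that)
qed

lemma inj_hom_elems:
  assumes "inj D" and "\<And>m. c m i \<noteq> 0"
  shows "inj (\<lambda>m. hom_elem (D m) (c m))"
proof (rule injI)
  fix m m' assume "hom_elem (D m) (c m) = hom_elem (D m') (c m')"
  then have "hom_elem (D m) (c m) (D m) i = hom_elem (D m') (c m') (D m) i"
    by simp
  with assms(2)[of m] have "D m = D m'"
    by (auto simp: hom_elem_def split: if_splits)
  with assms(1) show "m = m'"
    by (rule injD)
qed

lemma independent_hom_elems:
  assumes "inj D" and "\<And>m. c m i \<noteq> 0"
  shows "W.independent (range (\<lambda>m. hom_elem (D m) (c m)))"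
  unfolding W.dependent_explicit
proof clarify
  fix T u v
  assume T: "finite T" "T \<subseteq> range (\<lambda>m. hom_elem (D m) (c m))"
    and sum_zero: "(\<Sum>w\<in>T. wscale (u w) w) = 0" and "v \<in> T" and "u v \<noteq> 0"
  obtain m where v: "v = hom_elem (D m) (c m)"
    using \<open>v \<in> T\<close> T(2) by auto
  have others_vanish: "w (D m) i = 0" if w_other: "w \<in> T - {v}" for w
  proof -
    obtain m' where w: "w = hom_elem (D m') (c m')"
      using w_other T(2) by auto
    with w_other v assms(1) have "D m' \<noteq> D m"
      by (auto dest: injD)
    with w show ?thesis
      by (simp add: hom_elem_def)
  qed
  have "0 = (\<Sum>w\<in>T. u w * w (D m) i)"
    using fun_cong[OF fun_cong[OF sum_zero, of "D m"], of i]
    by (simp add: sum_fun_apply wscale_def)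
  also have "\<dots> = u v * v (D m) i + (\<Sum>w\<in>T - {v}. u w * w (D m) i)"
    using T(1) \<open>v \<in> T\<close> by (rule sum.remove)
  also have "(\<Sum>w\<in>T - {v}. u w * w (D m) i) = 0"
    using others_vanish by (intro sum.neutral) simp
  finally show False
    using \<open>u v \<noteq> 0\<close> assms(2)[of m] by (simp add: v hom_elem_def)
qed

lemma locally_finite_independent_orbit_finite:
  assumes "locally_finite n a" and "b \<in> Witt n" and "W.independent S"
    and "S \<subseteq> {(witt_bracket n a ^^ i) b | i. True}"
  shows "finite S"
proof -
  obtain F where "finite F" and "{(witt_bracket n a ^^ i) b | i. True} \<subseteq> W.span F"
    using assms(1,2) unfolding locally_finite_def by blast
  with assms(3,4) show ?thesis
    using W.independent_span_bound by blast
qed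

definition basis_elem :: "(nat \<Rightarrow> int) \<times> nat \<Rightarrow> (nat \<Rightarrow> int) \<Rightarrow> nat \<Rightarrow> 'k::field" where
  "basis_elem p = hom_elem (fst p) (\<lambda>k. of_bool (k = snd p))"

lemma in_span_basis_elems:
  fixes w :: "(nat \<Rightarrow> int) \<Rightarrow> nat \<Rightarrow> 'k::field"
  assumes "finite P" and "{(\<gamma>, k). w \<gamma> k \<noteq> 0} \<subseteq> P"
  shows "w \<in> W.span (basis_elem ` P)"
proof -
  have "w = (\<Sum>p\<in>P. wscale (w (fst p) (snd p)) (basis_elem p))"
  proof (intro ext)
    fix \<gamma> k
    have "(\<Sum>p\<in>P. wscale (w (fst p) (snd p)) (basis_elem p)) \<gamma> k
        = (\<Sum>p\<in>P. if p = (\<gamma>, k) then w \<gamma> k else 0)"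
      by (auto simp: sum_fun_apply wscale_def basis_elem_def hom_elem_def intro!: sum.cong)
    also have "\<dots> = w \<gamma> k"
      using assms by (auto simp: sum.delta')
    finally show "w \<gamma> k = (\<Sum>p\<in>P. wscale (w (fst p) (snd p)) (basis_elem p)) \<gamma> k"
      by simp
  qed
  also have "\<dots> \<in> W.span (basis_elem ` P)"
    by (intro W.span_sum W.span_scale W.span_base) auto
  finally show ?thesis .
qed

lemma cartan_locally_finite:
  fixes a :: "(nat \<Rightarrow> int) \<Rightarrow> nat \<Rightarrow> 'k::field"
  assumes "a \<in> cartan n"
  shows "locally_finite n a"
  unfolding locally_finite_def
proof
  fix b :: "(nat \<Rightarrow> int) \<Rightarrow> nat \<Rightarrow> 'k" assume "b \<in> Witt n"
  define P where "P = {(\<gamma>, k). b \<gamma> k \<noteq> 0}"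
  have "finite P"
    using \<open>b \<in> Witt n\<close> by (simp add: Witt_def P_def)
  define c where "c = a 0"
  have "a = hom_elem 0 c"
    using assms cartan_eq_hom_elem_zero unfolding c_def by blast
  then have ad_a: "witt_bracket n a w = (\<lambda>\<gamma> k. pairing n c \<gamma> * w \<gamma> k)" for w
    by (simp add: witt_bracket_cartan)
  have iterate: "(witt_bracket n a ^^ m) b = (\<lambda>\<gamma> k. pairing n c \<gamma> ^ m * b \<gamma> k)" for m
    by (induction m) (simp_all add: ad_a mult.assoc)
  have "(witt_bracket n a ^^ m) b \<in> W.span (basis_elem ` P)" for m
    unfolding iterate by (rule in_span_basis_elems[OF \<open>finite P\<close>]) (auto simp: P_def)
  with \<open>finite P\<close> show "\<exists>F. finite F \<and> {(witt_bracket n a ^^ i) b | i. True} \<subseteq> W.span F"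
    by blast
qed

lemma hom_elem_not_locally_finite:
  fixes c :: "nat \<Rightarrow> 'k::field_char_0"
  assumes a: "hom_elem \<alpha> c \<in> Witt n" and "\<alpha> \<noteq> 0" and "c i0 \<noteq> 0"
  shows "\<not> locally_finite n (hom_elem \<alpha> c)"
proof
  assume lf: "locally_finite n (hom_elem \<alpha> c)"
  have c_below: "k < n" if "c k \<noteq> 0" for k
    using a that unfolding Witt_def hom_elem_def by auto
  have "\<alpha> \<in> exps n"
    using a \<open>c i0 \<noteq> 0\<close> unfolding Witt_def hom_elem_def by auto
  then obtain \<beta> where "\<beta> \<in> exps n"
    and nonresonant: "\<And>j::nat. pairing n c (\<lambda>i. \<beta> i + int j * \<alpha> i) \<noteq> pairing n c \<alpha>"
    using exists_degree_nonresonant c_below \<open>c i0 \<noteq> 0\<close> by blast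
  define coeff where
    "coeff m = (\<lambda>k. c k * (\<Prod>j<m. pairing n c (\<lambda>i. \<beta> i + int j * \<alpha> i) - pairing n c \<alpha>))" for m
  define orbit where "orbit m = hom_elem (\<lambda>i. \<beta> i + int m * \<alpha> i) (coeff m)" for m
  have degree_inj: "inj (\<lambda>m::nat. \<lambda>i. \<beta> i + int m * \<alpha> i)"
    using \<open>\<alpha> \<noteq> 0\<close> by (auto intro!: injI simp: fun_eq_iff)
  have coeff_nonzero: "coeff m i0 \<noteq> 0" for m
    using nonresonant \<open>c i0 \<noteq> 0\<close> by (simp add: coeff_def)
  have "orbit m = (witt_bracket n (hom_elem \<alpha> c) ^^ m) (hom_elem \<beta> c)" for m
    by (simp add: orbit_def coeff_def witt_bracket_hom_elem_iterate)
  then have "range orbit \<subseteq> {(witt_bracket n (hom_elem \<alpha> c) ^^ i) (hom_elem \<beta> c) | i. True}"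
    by auto
  moreover have "W.independent (range orbit)"
    unfolding orbit_def using degree_inj coeff_nonzero by (rule independent_hom_elems)
  moreover have "hom_elem \<beta> c \<in> Witt n"
    using \<open>\<beta> \<in> exps n\<close> c_below by (rule hom_elem_in_Witt)
  ultimately have "finite (range orbit)"
    using lf locally_finite_independent_orbit_finite by blast
  moreover have "inj orbit"
    unfolding orbit_def using degree_inj coeff_nonzero by (rule inj_hom_elems)
  ultimately show False
    using finite_imageD infinite_UNIV_nat by blast
qed

lemma homogeneous_locally_finite_in_cartan:
  fixes a :: "(nat \<Rightarrow> int) \<Rightarrow> nat \<Rightarrow> 'k::field_char_0"
  assumes "a \<in> Witt n" and "homogeneous a" and "locally_finite n a"
  shows "a \<in> cartan n"
proof (rule ccontr)
  assume "a \<notin> cartan n"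
  obtain \<alpha> c where a: "a = hom_elem \<alpha> c"
    using assms(2) homogeneous_iff_hom_elem by blast
  from \<open>a \<notin> cartan n\<close> assms(1) obtain \<gamma> i0 where "a \<gamma> i0 \<noteq> 0" and "\<gamma> \<noteq> 0"
    by (auto simp: cartan_def)
  then have "c i0 \<noteq> 0" and "\<alpha> \<noteq> 0"
    by (auto simp: a hom_elem_def split: if_splits)
  with assms(1,3) show False
    unfolding a using hom_elem_not_locally_finite by blast
qed

theorem lemma2p4:
  fixes n :: nat
  shows "{a \<in> (Witt n :: ((nat \<Rightarrow> int) \<Rightarrow> nat \<Rightarrow> 'k::field_char_0) set).
            homogeneous a \<and> locally_finite n a} = cartan n"
proof (intro set_eqI iffI)
  fix a :: "(nat \<Rightarrow> int) \<Rightarrow> nat \<Rightarrow> 'k"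
  assume "a \<in> {a \<in> Witt n. homogeneous a \<and> locally_finite n a}"
  then show "a \<in> cartan n"
    using homogeneous_locally_finite_in_cartan by blast
next
  fix a :: "(nat \<Rightarrow> int) \<Rightarrow> nat \<Rightarrow> 'k"
  assume "a \<in> cartan n"
  then have "homogeneous a"
    using cartan_eq_hom_elem_zero homogeneous_iff_hom_elem by blast
  with \<open>a \<in> cartan n\<close> show "a \<in> {a \<in> Witt n. homogeneous a \<and> locally_finite n a}"
    using cartan_locally_finite by (simp add: cartan_def)
qed

end
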